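(* For any $f : X \to \mathbb{R}$, Player II has a winning strategy in $\Gamma(f)$ if and only if $f$ is a limsup function.
   Context: Let $A$ be a non-empty countable set and $T$ a pruned tree on $A$ (a set of finite sequences of elements of $A$, closed under initial segments, in which every sequence has a proper extension in $T$). Let $X$ be the set of infinite branches of $T$, with the topology generated by the cylinder sets $O(s) = \{x \in X : s \text{ is an initial segment of } x\}$, $s \in T$. A function $f : X \to \mathbb{R}$ is a limsup function if there exists $u : T \to \mathbb{R}$ with $f(x) = \limsup_{t\to\infty} u(x_0,\dots,x_t)$ for every $x \in X$. The game $\Gamma(f)$: Player I and Player II alternate, Player I moving first; Player I plays $x_0, x_1, \dots \in A$ subject to $(x_0,\dots,x_t) \in T$ for all $t$, and after each move $x_t$ Player II plays a real number $v_t$ (both players see all previous moves). Player II wins the run $(x_0,v_0,x_1,v_1,\dots)$ iff $f(x_0,x_1,\dots) = \limsup_{t\to\infty} v_t$; otherwise Player I wins. *)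

theory Defs
  imports Complex_Main "HOL-Library.Liminf_Limsup" "HOL-Library.Extended_Real" "HOL-Library.Countable_Set"
begin

text \<open>Finite sequences are lists; the initial segment of length n of an infinite
  sequence x is map x [0..<n].\<close>

definition pruned_tree :: "'a set \<Rightarrow> 'a list set \<Rightarrow> bool" where
  "pruned_tree A T \<longleftrightarrow>
     T \<subseteq> lists A \<and>
     (\<forall>s t. s @ t \<in> T \<longrightarrow> s \<in> T) \<and>
     (\<forall>s\<in>T. \<exists>a. s @ [a] \<in> T)"

definition branches :: "'a list set \<Rightarrow> (nat \<Rightarrow> 'a) set" where
  "branches T = {x. \<forall>n. map x [0..<Suc n] \<in> T}"

definition limsup_function :: "'a list set \<Rightarrow> ((nat \<Rightarrow> 'a) \<Rightarrow> real) \<Rightarrow> bool" where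
  "limsup_function T f \<longleftrightarrow>
     (\<exists>u :: 'a list \<Rightarrow> real. \<forall>x\<in>branches T.
        ereal (f x) = limsup (\<lambda>t. ereal (u (map x [0..<Suc t]))))"

text \<open>A strategy of Player II: given Player I's moves x_0..x_t and II's previous
  moves v_0..v_(t-1), it returns v_t.  A run (x, v) is consistent with sigma if
  every v_t is produced by sigma.\<close>
definition consistent_II ::
    "('a list \<Rightarrow> real list \<Rightarrow> real) \<Rightarrow> (nat \<Rightarrow> 'a) \<Rightarrow> (nat \<Rightarrow> real) \<Rightarrow> bool" where
  "consistent_II \<sigma> x v \<longleftrightarrow> (\<forall>t. v t = \<sigma> (map x [0..<Suc t]) (map v [0..<t]))"

definition II_wins_run :: "((nat \<Rightarrow> 'a) \<Rightarrow> real) \<Rightarrow> (nat \<Rightarrow> 'a) \<Rightarrow> (nat \<Rightarrow> real) \<Rightarrow> bool" where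
  "II_wins_run f x v \<longleftrightarrow> ereal (f x) = limsup (\<lambda>t. ereal (v t))"

definition winning_strategy_II ::
    "'a list set \<Rightarrow> ((nat \<Rightarrow> 'a) \<Rightarrow> real) \<Rightarrow> ('a list \<Rightarrow> real list \<Rightarrow> real) \<Rightarrow> bool" where
  "winning_strategy_II T f \<sigma> \<longleftrightarrow>
     (\<forall>x\<in>branches T. \<forall>v. consistent_II \<sigma> x v \<longrightarrow> II_wins_run f x v)"

end

theory Submission
  imports Defs
begin

text \<open>Player I's moves already determine Player II's whole run under a fixed strategy, so any
  strategy of II can be replaced by one that only looks at I's moves; such a strategy is just a
  labelling u of the positions, and the runs it produces are exactly the sequences
  u(x_0,...,x_t) whose limsup defines a limsup function.\<close>

fun replies :: "('a list \<Rightarrow> real list \<Rightarrow> real) \<Rightarrow> 'a list \<Rightarrow> nat \<Rightarrow> real list" where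
  "replies \<sigma> s 0 = []"
| "replies \<sigma> s (Suc n) = replies \<sigma> s n @ [\<sigma> (take (Suc n) s) (replies \<sigma> s n)]"

lemma replies_cong:
  assumes "take n s = take n s'"
  shows "replies \<sigma> s n = replies \<sigma> s' n"
  using assms
proof (induction n)
  case (Suc n)
  have "take n s = take n s'"
    using arg_cong[OF Suc.prems, of "take n"] by simp
  with Suc show ?case by simp
qed simp

definition positional_strategy :: "('a list \<Rightarrow> real list \<Rightarrow> real) \<Rightarrow> 'a list \<Rightarrow> real" where
  "positional_strategy \<sigma> s = \<sigma> s (replies \<sigma> s (length s - 1))"

lemma replies_along_branch:
  "map (\<lambda>t. positional_strategy \<sigma> (map x [0..<Suc t])) [0..<n] = replies \<sigma> (map x [0..<n]) n"
proof (induction n)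
  case (Suc n)
  have "replies \<sigma> (map x [0..<Suc n]) n = replies \<sigma> (map x [0..<n]) n"
    by (rule replies_cong) (simp add: take_map)
  with Suc show ?case
    by (simp add: positional_strategy_def)
qed simp

lemma consistent_positional_strategy:
  "consistent_II \<sigma> x (\<lambda>t. positional_strategy \<sigma> (map x [0..<Suc t]))"
  unfolding consistent_II_def
proof
  fix t
  have "replies \<sigma> (map x [0..<Suc t]) t = replies \<sigma> (map x [0..<t]) t"
    by (rule replies_cong) (simp add: take_map)
  then show "positional_strategy \<sigma> (map x [0..<Suc t]) =
      \<sigma> (map x [0..<Suc t]) (map (\<lambda>t. positional_strategy \<sigma> (map x [0..<Suc t])) [0..<t])"
    unfolding replies_along_branch by (simp add: positional_strategy_def)
qed

lemma limsup_function_if_winning_strategy_II: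
  assumes "winning_strategy_II T f \<sigma>"
  shows "limsup_function T f"
  unfolding limsup_function_def
proof (intro exI ballI)
  fix x assume "x \<in> branches T"
  with assms consistent_positional_strategy
  have "II_wins_run f x (\<lambda>t. positional_strategy \<sigma> (map x [0..<Suc t]))"
    unfolding winning_strategy_II_def by blast
  then show "ereal (f x) = limsup (\<lambda>t. ereal (positional_strategy \<sigma> (map x [0..<Suc t])))"
    unfolding II_wins_run_def .
qed

lemma winning_strategy_II_if_limsup:
  assumes "\<forall>x\<in>branches T. ereal (f x) = limsup (\<lambda>t. ereal (u (map x [0..<Suc t])))"
  shows "winning_strategy_II T f (\<lambda>s _. u s)"
  unfolding winning_strategy_II_def consistent_II_def II_wins_run_def
proof (intro ballI allI impI)
  fix x v
  assume "x \<in> branches T" and "\<forall>t. v t = u (map x [0..<Suc t])"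
  then show "ereal (f x) = limsup (\<lambda>t. ereal (v t))"
    using assms by simp
qed

theorem mainTheorem6:
  fixes A :: "'a set" and T :: "'a list set" and f :: "(nat \<Rightarrow> 'a) \<Rightarrow> real"
  assumes "A \<noteq> {}" and "countable A" and "pruned_tree A T"
  shows "(\<exists>\<sigma>. winning_strategy_II T f \<sigma>) \<longleftrightarrow> limsup_function T f"
  using limsup_function_if_winning_strategy_II winning_strategy_II_if_limsup
  unfolding limsup_function_def by blast

end
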